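(* Let $D_1\subset\mathbb{R}^2$ be an open disc centered at the origin, let $\boldsymbol{\gamma}_1,\dots,\boldsymbol{\gamma}_m$ be distinct unit vectors in $\mathbb{R}^2$ and $c_1,\dots,c_m$ nonzero reals. If $\boldsymbol{\gamma}(\boldsymbol{\psi})\neq 0$ for at least one $\boldsymbol{\psi}\in\mathbb{S}^1\setminus\mathcal{Z}_1$, then the vector-valued star transform $\mathcal{S}$ is invertible, i.e. every vector field $\mathbf{f}$ on $\mathbb{R}^2$ with components in $C^2_c(D_1)$ is uniquely (and explicitly) determined by $\mathcal{S}\mathbf{f}$.
   Context: For $\mathbf{x}=(x_1,x_2)$ set $\mathbf{x}^\perp=(-x_2,x_1)$. For a unit vector $\boldsymbol{\gamma}$, $\mathcal{X}_{\boldsymbol{\gamma}}h(\mathbf{x})=\int_0^\infty h(\mathbf{x}+t\boldsymbol{\gamma})\,dt$. The vector-valued star transform is $\mathcal{S}\mathbf{f}=\sum_{i=1}^m c_i\,\mathcal{X}_{\boldsymbol{\gamma}_i}\begin{bmatrix}\mathbf{f}\cdot\boldsymbol{\gamma}_i\\ \mathbf{f}\cdot\boldsymbol{\gamma}_i^\perp\end{bmatrix}$. $\mathcal{Z}_1=\bigcup_{i}\{\boldsymbol{\psi}\in\mathbb{S}^1:\boldsymbol{\psi}\cdot\boldsymbol{\gamma}_i=0\}$, and for $\boldsymbol{\psi}\in\mathbb{S}^1\setminus\mathcal{Z}_1$, $\boldsymbol{\gamma}(\boldsymbol{\psi})=-\sum_{i=1}^m\frac{c_i\boldsymbol{\gamma}_i}{\boldsymbol{\psi}\cdot\boldsymbol{\gamma}_i}$.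 *)

theory Defs
  imports "HOL-Analysis.Analysis"
begin

definition perp :: "real \<times> real \<Rightarrow> real \<times> real" where
  "perp x = (- snd x, fst x)"

definition divbeam :: "real \<times> real \<Rightarrow> (real \<times> real \<Rightarrow> real) \<Rightarrow> real \<times> real \<Rightarrow> real" where
  "divbeam g h x = integral {0..} (\<lambda>t. h (x + t *\<^sub>R g))"

definition star_transform ::
  "nat \<Rightarrow> (nat \<Rightarrow> real) \<Rightarrow> (nat \<Rightarrow> real \<times> real) \<Rightarrow> (real \<times> real \<Rightarrow> real \<times> real)
     \<Rightarrow> real \<times> real \<Rightarrow> real \<times> real" where
  "star_transform m c gam f x =
     ((\<Sum>i<m. c i * divbeam (gam i) (\<lambda>y. f y \<bullet> gam i) x),
      (\<Sum>i<m. c i * divbeam (gam i) (\<lambda>y. f y \<bullet> perp (gam i)) x))"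

definition Z1 :: "nat \<Rightarrow> (nat \<Rightarrow> real \<times> real) \<Rightarrow> (real \<times> real) set" where
  "Z1 m gam = (\<Union>i<m. {psi. norm psi = 1 \<and> psi \<bullet> gam i = 0})"

definition gamma_vec :: "nat \<Rightarrow> (nat \<Rightarrow> real) \<Rightarrow> (nat \<Rightarrow> real \<times> real) \<Rightarrow> real \<times> real \<Rightarrow> real \<times> real" where
  "gamma_vec m c gam psi = - (\<Sum>i<m. (c i / (psi \<bullet> gam i)) *\<^sub>R gam i)"

definition C2 :: "('a::real_normed_vector \<Rightarrow> 'b::real_normed_vector) \<Rightarrow> bool" where
  "C2 f \<longleftrightarrow> (\<exists>f' :: 'a \<Rightarrow> ('a \<Rightarrow>\<^sub>L 'b). \<exists>f'' :: 'a \<Rightarrow> ('a \<Rightarrow>\<^sub>L ('a \<Rightarrow>\<^sub>L 'b)).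
      (\<forall>x. (f has_derivative blinfun_apply (f' x)) (at x)) \<and>
      (\<forall>x. (f' has_derivative blinfun_apply (f'' x)) (at x)) \<and>
      continuous_on UNIV f'')"

definition C2c :: "(real \<times> real) set \<Rightarrow> (real \<times> real \<Rightarrow> real) \<Rightarrow> bool" where
  "C2c D h \<longleftrightarrow> C2 h \<and> compact (closure {x. h x \<noteq> 0}) \<and> closure {x. h x \<noteq> 0} \<subseteq> D"

end

theory Submission
  imports Defs "HOL-Computational_Algebra.Polynomial"
begin

text \<open>
  Let F be the difference of two fields with the same star transform, so S F = 0, and fix a
  slope t such that (t, 1) is a regular direction: (t, 1) is orthogonal to no gam i and
  gamma_vec (t, 1) \<noteq> 0. Integrating S F over the parallel lines x2 + t x1 = s turns the beam
  along gam i into -1 / ((t, 1) \<bullet> gam i) times the primitive in s of the line integrals of its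
  integrand, up to a constant. For the vector J(s) of primitives of the line integrals of the
  two components of F this says that J(s) \<bullet> gamma_vec (t, 1) and perp (J(s)) \<bullet> gamma_vec (t, 1)
  do not depend on s. Since J(s) = 0 for s below the support, J = 0, so every line integral
  of F with slope t vanishes.

  The non-regular directions on a line form the zero set of a nonzero polynomial, so there are
  infinitely many regular slopes t. Expanding the integral of F against (t x1 + x2)^n
  binomially gives a polynomial in t with infinitely many roots, hence all moments of F vanish,
  and F = 0 by the Stone-Weierstrass theorem.
\<close>

section \<open>Continuous functions with bounded support\<close>

definition cont_supp_ball :: "real \<Rightarrow> (real \<times> real \<Rightarrow> real) \<Rightarrow> bool" where
  "cont_supp_ball R h \<longleftrightarrow> continuous_on UNIV h \<and> (\<forall>x. R \<le> norm x \<longrightarrow> h x = 0)"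

lemma cont_supp_ball_compose:
  assumes "cont_supp_ball R h" "continuous_on S p"
  shows "continuous_on S (\<lambda>x. h (p x))"
  using assms continuous_on_compose2[OF _ _ subset_UNIV] by (auto simp: cont_supp_ball_def)

lemma cont_supp_ball_continuous: "cont_supp_ball R h \<Longrightarrow> continuous_on S h"
  using cont_supp_ball_compose[of R h S "\<lambda>x. x"] by simp

lemma cont_supp_ball_eq_0: "cont_supp_ball R h \<Longrightarrow> R \<le> norm x \<Longrightarrow> h x = 0"
  unfolding cont_supp_ball_def by blast

lemma cont_supp_ball_nonzero_Pair:
  assumes "cont_supp_ball R h" "h (a, b) \<noteq> 0"
  shows "\<bar>a\<bar> < R" "\<bar>b\<bar> < R"
proof -
  have "norm (a, b) < R"
    using cont_supp_ball_eq_0[OF assms(1), of "(a, b)"] assms(2) by linarith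
  then show "\<bar>a\<bar> < R" "\<bar>b\<bar> < R"
    using norm_fst_le[of a b] norm_snd_le[of b a] by auto
qed

lemma cont_supp_ball_lincomb:
  assumes "cont_supp_ball R f" "cont_supp_ball R g"
  shows "cont_supp_ball R (\<lambda>x. \<alpha> * f x + \<beta> * g x)"
  unfolding cont_supp_ball_def
proof
  show "continuous_on UNIV (\<lambda>x. \<alpha> * f x + \<beta> * g x)"
    using cont_supp_ball_continuous[OF assms(1)] cont_supp_ball_continuous[OF assms(2)]
    by (intro continuous_intros)
  show "\<forall>x. R \<le> norm x \<longrightarrow> \<alpha> * f x + \<beta> * g x = 0"
    using cont_supp_ball_eq_0[OF assms(1)] cont_supp_ball_eq_0[OF assms(2)] by simp
qed

lemma cont_supp_ball_inner:
  assumes "cont_supp_ball R (\<lambda>x. fst (F x))" "cont_supp_ball R (\<lambda>x. snd (F x))"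
  shows "cont_supp_ball R (\<lambda>x. F x \<bullet> v)"
  using cont_supp_ball_lincomb[OF assms, of "fst v" "snd v"] by (simp add: inner_prod_def mult.commute)

lemma cont_supp_ball_diff:
  assumes "cont_supp_ball R f" "cont_supp_ball R g"
  shows "cont_supp_ball R (\<lambda>x. f x - g x)"
  using cont_supp_ball_lincomb[OF assms, of 1 "-1"] by simp

lemma cont_supp_ball_if_C2c:
  assumes "C2c (ball 0 R) h"
  shows "cont_supp_ball R h"
  unfolding cont_supp_ball_def
proof
  from assms obtain h' where "\<And>x. (h has_derivative blinfun_apply (h' x)) (at x)"
    unfolding C2c_def C2_def by blast
  then show "continuous_on UNIV h"
    by (meson continuous_at_imp_continuous_on has_derivative_continuous)
  have "closure {x. h x \<noteq> 0} \<subseteq> ball 0 R"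
    using assms by (simp add: C2c_def)
  with closure_subset have supp: "{x. h x \<noteq> 0} \<subseteq> ball 0 R"
    by (rule order_trans)
  show "\<forall>x. R \<le> norm x \<longrightarrow> h x = 0"
  proof (intro allI impI)
    fix x :: "real \<times> real"
    assume "R \<le> norm x"
    then have "x \<notin> ball 0 R" by simp
    then show "h x = 0" using supp by blast
  qed
qed

lemma has_integral_UNIV_window:
  fixes k :: "real \<Rightarrow> real"
  assumes "continuous_on UNIV k" "\<And>x. x \<notin> {p..q} \<Longrightarrow> k x = 0"
  shows "(k has_integral integral {p..q} k) UNIV"
proof -
  have "(k has_integral integral {p..q} k) {p..q}"
    using assms(1) by (intro integrable_integral integrable_continuous_real continuous_on_subset[OF assms(1)]) auto
  then show ?thesis
    using assms(2) by (rule has_integral_on_superset) auto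
qed

lemma integral_window_eq:
  fixes k :: "real \<Rightarrow> real"
  assumes "continuous_on UNIV k" "\<And>x. x \<notin> {p..q} \<Longrightarrow> k x = 0" "{p..q} \<subseteq> {p'..q'}"
  shows "integral {p'..q'} k = integral {p..q} k"
proof -
  have "(k has_integral integral {p'..q'} k) UNIV"
    by (rule has_integral_UNIV_window[OF assms(1)]) (use assms(2,3) in auto)
  then show ?thesis
    using has_integral_UNIV_window[OF assms(1,2)] by (rule has_integral_unique)
qed

lemma has_integral_halfline_window:
  fixes k :: "real \<Rightarrow> real"
  assumes k: "continuous_on UNIV k" and vanish: "\<And>u. U < u \<Longrightarrow> k u = 0"
  shows "(k has_integral integral {0..U} k) {0..}"
proof -
  have "{u \<in> {0..U} - {0..}. k u \<noteq> 0} = {}" "{u \<in> {0..} - {0..U}. k u \<noteq> 0} = {}"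
    using vanish by force+
  then have spike: "(k has_integral integral {0..U} k) {0..U} \<longleftrightarrow> (k has_integral integral {0..U} k) {0..}"
    by (intro has_integral_spike_set_eq) (simp_all only: negligible_empty)
  have "(k has_integral integral {0..U} k) {0..U}"
    by (intro integrable_integral integrable_continuous_real continuous_on_subset[OF k]) auto
  then show ?thesis
    unfolding spike .
qed

lemma has_integral_divbeam:
  assumes h: "cont_supp_ball R h" and g: "norm g = 1"
  shows "((\<lambda>u. h (x + u *\<^sub>R g)) has_integral divbeam g h x) {0..}"
proof -
  have "((\<lambda>u. h (x + u *\<^sub>R g)) has_integral integral {0..norm x + R} (\<lambda>u. h (x + u *\<^sub>R g))) {0..}"
  proof (rule has_integral_halfline_window)
    show "continuous_on UNIV (\<lambda>u. h (x + u *\<^sub>R g))"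
      by (intro cont_supp_ball_compose[OF h] continuous_intros)
    show "h (x + u *\<^sub>R g) = 0" if "norm x + R < u" for u
    proof (rule cont_supp_ball_eq_0[OF h])
      have "norm (u *\<^sub>R g) \<le> norm (x + u *\<^sub>R g) + norm x"
        by (metis add_diff_cancel_left' norm_triangle_ineq4)
      then show "R \<le> norm (x + u *\<^sub>R g)"
        using that g by auto
    qed
  qed
  then show ?thesis
    unfolding divbeam_def by (metis integral_unique)
qed

lemma divbeam_diff:
  assumes "cont_supp_ball R h" "cont_supp_ball R k" "norm g = 1"
  shows "divbeam g (\<lambda>y. h y - k y) x = divbeam g h x - divbeam g k x"
  unfolding divbeam_def[of g "\<lambda>y. h y - k y"]
  by (intro integral_unique has_integral_diff has_integral_divbeam[OF assms(1,3)]
      has_integral_divbeam[OF assms(2,3)])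

lemma star_transform_diff:
  assumes g: "\<And>i. i < m \<Longrightarrow> norm (gam i) = 1"
    and f: "cont_supp_ball R (\<lambda>x. fst (f x))" "cont_supp_ball R (\<lambda>x. snd (f x))"
    and h: "cont_supp_ball R (\<lambda>x. fst (h x))" "cont_supp_ball R (\<lambda>x. snd (h x))"
  shows "star_transform m c gam (\<lambda>x. f x - h x) x = star_transform m c gam f x - star_transform m c gam h x"
proof -
  have "divbeam (gam i) (\<lambda>y. (f y - h y) \<bullet> v) x
      = divbeam (gam i) (\<lambda>y. f y \<bullet> v) x - divbeam (gam i) (\<lambda>y. h y \<bullet> v) x"
    if "i < m" for i v
    unfolding inner_diff_left
    by (rule divbeam_diff[OF cont_supp_ball_inner[OF f] cont_supp_ball_inner[OF h] g[OF that]])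
  then show ?thesis
    unfolding star_transform_def by (simp add: right_diff_distrib sum_subtractf)
qed

section \<open>Line integrals along a pencil of parallel lines\<close>

text \<open>The integral of h over the line x2 + t x1 = s, parametrised by x1; for h supported in
  the disc of radius R the window [-R, R] of x1 covers the whole support.\<close>

definition radon :: "real \<Rightarrow> (real \<times> real \<Rightarrow> real) \<Rightarrow> real \<Rightarrow> real \<Rightarrow> real" where
  "radon R h t s = integral {-R..R} (\<lambda>y. h (y, s - t * y))"

lemma continuous_on_radon:
  assumes h: "cont_supp_ball R h"
  shows "continuous_on S (radon R h t)"
proof -
  have "continuous_on (UNIV \<times> cbox (-R) R) (\<lambda>(s, y). h (y, s - t * y))"
    unfolding case_prod_beta' by (intro cont_supp_ball_compose[OF h] continuous_intros)
  then have "continuous_on UNIV (\<lambda>s. integral (cbox (-R) R) (\<lambda>y. h (y, s - t * y)))"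
    by (rule integral_continuous_on_param)
  then show ?thesis
    unfolding radon_def[abs_def] by (auto intro: continuous_on_subset)
qed

lemma radon_eq_0:
  assumes h: "cont_supp_ball R h" and s: "(\<bar>t\<bar> + 1) * R \<le> \<bar>s\<bar>"
  shows "radon R h t s = 0"
proof -
  have "h (y, s - t * y) = 0" for y
  proof (rule ccontr)
    assume "h (y, s - t * y) \<noteq> 0"
    from cont_supp_ball_nonzero_Pair[OF h this] have "\<bar>y\<bar> < R" "\<bar>s - t * y\<bar> < R" .
    moreover from \<open>\<bar>y\<bar> < R\<close> have "\<bar>t * y\<bar> \<le> \<bar>t\<bar> * R"
      by (simp add: abs_mult mult_left_mono)
    moreover have "\<bar>s\<bar> \<le> \<bar>t * y\<bar> + \<bar>s - t * y\<bar>"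
      by linarith
    ultimately show False
      using s by (simp add: algebra_simps)
  qed
  then show ?thesis
    unfolding radon_def by simp
qed

lemma radon_window:
  assumes h: "cont_supp_ball R h" and "p \<le> -R" "R \<le> q"
  shows "integral {p..q} (\<lambda>y. h (y, s - t * y)) = radon R h t s"
  unfolding radon_def
proof (rule integral_window_eq)
  show "continuous_on UNIV (\<lambda>y. h (y, s - t * y))"
    by (intro cont_supp_ball_compose[OF h] continuous_intros)
  show "h (y, s - t * y) = 0" if "y \<notin> {-R..R}" for y
    using that cont_supp_ball_nonzero_Pair(1)[OF h, of y] by force
qed (use assms in auto)

lemma radon_lincomb:
  assumes f: "cont_supp_ball R f" and g: "cont_supp_ball R g"
  shows "radon R (\<lambda>x. \<alpha> * f x + \<beta> * g x) t s = \<alpha> * radon R f t s + \<beta> * radon R g t s"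
proof -
  have "(\<lambda>y. f (y, s - t * y)) integrable_on {-R..R}" "(\<lambda>y. g (y, s - t * y)) integrable_on {-R..R}"
    by (intro integrable_continuous_real cont_supp_ball_compose[OF f] cont_supp_ball_compose[OF g]
        continuous_intros)+
  then show ?thesis
    unfolding radon_def by (simp add: Henstock_Kurzweil_Integration.integral_add integrable_on_mult_right)
qed

definition radon_primitive :: "real \<Rightarrow> (real \<times> real \<Rightarrow> real) \<Rightarrow> real \<Rightarrow> real \<Rightarrow> real" where
  "radon_primitive R h t s = integral {-((\<bar>t\<bar> + 1) * R)..s} (radon R h t)"

lemma radon_primitive_eq:
  assumes h: "cont_supp_ball R h" and p: "p \<le> -((\<bar>t\<bar> + 1) * R)" "p \<le> s"
  shows "integral {p..s} (radon R h t) = radon_primitive R h t s"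
proof (cases "s \<le> -((\<bar>t\<bar> + 1) * R)")
  case True
  then have "integral {p..s} (radon R h t) = 0" "radon_primitive R h t s = 0"
    unfolding radon_primitive_def
    by (auto intro!: integral_unique has_integral_is_0 radon_eq_0[OF h])
  then show ?thesis by simp
next
  case False
  have "integral {p..-((\<bar>t\<bar> + 1) * R)} (radon R h t) + radon_primitive R h t s
      = integral {p..s} (radon R h t)"
    unfolding radon_primitive_def using p False
    by (intro Henstock_Kurzweil_Integration.integral_combine integrable_continuous_real continuous_on_radon[OF h]) auto
  moreover have "integral {p..-((\<bar>t\<bar> + 1) * R)} (radon R h t) = 0"
    by (auto intro!: integral_unique has_integral_is_0 radon_eq_0[OF h])
  ultimately show ?thesis by simp
qed

lemma radon_primitive_eq_0:
  assumes "cont_supp_ball R h" "s \<le> -((\<bar>t\<bar> + 1) * R)"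
  shows "radon_primitive R h t s = 0"
  using radon_primitive_eq[OF assms(1), of s t s] assms(2) by simp

lemma radon_primitive_const:
  assumes h: "cont_supp_ball R h" and R: "0 \<le> R" and s: "(\<bar>t\<bar> + 1) * R \<le> s"
  shows "radon_primitive R h t s = radon_primitive R h t ((\<bar>t\<bar> + 1) * R)"
proof -
  let ?B = "(\<bar>t\<bar> + 1) * R"
  have "radon_primitive R h t ?B + integral {?B..s} (radon R h t) = radon_primitive R h t s"
    unfolding radon_primitive_def using s R
    by (intro Henstock_Kurzweil_Integration.integral_combine integrable_continuous_real continuous_on_radon[OF h]) auto
  moreover have "integral {?B..s} (radon R h t) = 0"
    by (auto intro!: integral_unique has_integral_is_0 radon_eq_0[OF h])
  ultimately show ?thesis by simp
qed

lemma has_real_derivative_radon_primitive: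
  assumes h: "cont_supp_ball R h"
  shows "(radon_primitive R h t has_real_derivative radon R h t s) (at s)"
proof -
  define p where "p = min (-((\<bar>t\<bar> + 1) * R)) s - 1"
  have "((\<lambda>x. integral {p..x} (radon R h t)) has_real_derivative radon R h t s) (at s within {p..s+1})"
    by (rule integral_has_real_derivative) (auto simp: p_def intro: continuous_on_radon[OF h])
  moreover have "at s within {p..s+1} = at s"
    by (intro at_within_interior) (auto simp: p_def)
  ultimately have "((\<lambda>x. integral {p..x} (radon R h t)) has_real_derivative radon R h t s) (at s)"
    by simp
  then show ?thesis
    by (rule has_field_derivative_transform_within_open[where S = "{p<..}"])
       (auto simp: p_def intro!: radon_primitive_eq[OF h])
qed

lemma radon_primitive_lincomb:
  assumes f: "cont_supp_ball R f" and g: "cont_supp_ball R g"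
  shows "radon_primitive R (\<lambda>x. \<alpha> * f x + \<beta> * g x) t s
       = \<alpha> * radon_primitive R f t s + \<beta> * radon_primitive R g t s"
proof -
  have "radon R f t integrable_on {-((\<bar>t\<bar> + 1) * R)..s}" "radon R g t integrable_on {-((\<bar>t\<bar> + 1) * R)..s}"
    by (intro integrable_continuous_real continuous_on_radon f g)+
  then show ?thesis
    unfolding radon_primitive_def radon_lincomb[OF f g]
    by (simp add: Henstock_Kurzweil_Integration.integral_add integrable_on_mult_right)
qed

lemma radon_eq_0_if_primitive_eq_0:
  assumes h: "cont_supp_ball R h" and J: "\<And>s. radon_primitive R h t s = 0"
  shows "radon R h t s = 0"
proof -
  have "radon_primitive R h t = (\<lambda>_. 0)"
    using J by auto
  then have "((\<lambda>_. 0) has_real_derivative radon R h t s) (at s)"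
    using has_real_derivative_radon_primitive[OF h] by metis
  then show ?thesis
    using DERIV_const DERIV_unique by blast
qed

lemma integral_radon_along_ray:
  assumes h: "cont_supp_ball R h" and R: "0 \<le> R" and a: "a \<noteq> 0"
    and U: "U = (\<bar>s\<bar> + (\<bar>t\<bar> + 1) * R) / \<bar>a\<bar>"
  shows "integral {0..U} (\<lambda>u. radon R h t (s + u * a))
       = (if 0 < a then radon_primitive R h t ((\<bar>t\<bar> + 1) * R) / a else 0) - radon_primitive R h t s / a"
proof -
  let ?B = "(\<bar>t\<bar> + 1) * R"
  let ?P = "\<lambda>u. radon_primitive R h t (s + u * a) / a"
  have deriv: "(?P has_real_derivative radon R h t (s + u * a)) (at u)" for u
  proof -
    have "((\<lambda>u. s + u * a) has_real_derivative a) (at u)"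
      by (auto intro!: derivative_eq_intros)
    from DERIV_cdivide[OF DERIV_chain2[OF has_real_derivative_radon_primitive[OF h, of t] this], where c = a]
    show ?thesis
      using a by simp
  qed
  have "0 \<le> U"
    using R by (simp add: U)
  then have "((\<lambda>u. radon R h t (s + u * a)) has_integral (?P U - ?P 0)) {0..U}"
    using deriv
    by (intro fundamental_theorem_of_calculus)
       (auto simp: has_real_derivative_iff_has_vector_derivative intro: has_vector_derivative_at_within)
  moreover have "radon_primitive R h t (s + U * a) = (if 0 < a then radon_primitive R h t ?B else 0)"
  proof (cases "0 < a")
    case True
    then have "s + U * a = s + \<bar>s\<bar> + ?B"
      by (simp add: U)
    then show ?thesis
      using True radon_primitive_const[OF h R, of t "s + U * a"] by simp
  next
    case False
    with a have "s + U * a = s - \<bar>s\<bar> - ?B"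
      by (simp add: U)
    then show ?thesis
      using False radon_primitive_eq_0[OF h, of "s + U * a" t] by simp
  qed
  ultimately show ?thesis
    by (simp add: integral_unique diff_divide_distrib)
qed

lemma beam_nonzero_bounds:
  assumes h: "cont_supp_ball R h" and g: "norm g = 1"
    and nz: "h ((y, s - t * y) + u *\<^sub>R g) \<noteq> 0" and u: "0 \<le> u"
  shows "\<bar>s + u * (t * fst g + snd g)\<bar> < (\<bar>t\<bar> + 1) * R" "\<bar>y\<bar> < R + u"
proof -
  obtain g1 g2 where gg: "g = (g1, g2)"
    by (cases g)
  have "\<bar>g1\<bar> \<le> 1"
    using norm_fst_le[of g1 g2] g gg by simp
  from nz cont_supp_ball_nonzero_Pair[OF h, of "y + u * g1" "s - t * y + u * g2"]
  have z1: "\<bar>y + u * g1\<bar> < R" and z2: "\<bar>s - t * y + u * g2\<bar> < R"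
    by (auto simp: gg)
  have "\<bar>t * (y + u * g1)\<bar> \<le> \<bar>t\<bar> * R"
    using z1 by (simp add: abs_mult mult_left_mono)
  moreover have "s + u * (t * g1 + g2) = t * (y + u * g1) + (s - t * y + u * g2)"
    by (simp add: algebra_simps)
  ultimately show "\<bar>s + u * (t * fst g + snd g)\<bar> < (\<bar>t\<bar> + 1) * R"
    using z2 by (simp add: gg algebra_simps)
  have "\<bar>u * g1\<bar> \<le> u"
    using u \<open>\<bar>g1\<bar> \<le> 1\<close> by (simp add: abs_mult mult_left_le)
  then show "\<bar>y\<bar> < R + u"
    using z1 by linarith
qed

lemma has_integral_UNIV_iterated:
  fixes \<phi> :: "real \<Rightarrow> real \<Rightarrow> real"
  assumes cont: "continuous_on UNIV (\<lambda>(y, u). \<phi> y u)"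
    and vanish: "\<And>y u. u \<in> {c..d} \<Longrightarrow> y \<notin> {a..b} \<Longrightarrow> \<phi> y u = 0"
  shows "((\<lambda>y. integral {c..d} (\<phi> y)) has_integral
           integral {c..d} (\<lambda>u. integral {a..b} (\<lambda>y. \<phi> y u))) UNIV"
proof -
  have "continuous_on UNIV (\<lambda>y. integral (cbox c d) (\<phi> y))"
    by (intro integral_continuous_on_param continuous_on_subset[OF cont]) auto
  then have "((\<lambda>y. integral {c..d} (\<phi> y)) has_integral integral {a..b} (\<lambda>y. integral {c..d} (\<phi> y))) UNIV"
    by (intro has_integral_UNIV_window) (auto intro!: integral_unique has_integral_is_0 vanish)
  moreover have "integral (cbox a b) (\<lambda>y. integral (cbox c d) (\<phi> y))
               = integral (cbox c d) (\<lambda>u. integral (cbox a b) (\<lambda>y. \<phi> y u))"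
    by (intro integral_swap_continuous continuous_on_subset[OF cont]) auto
  ultimately show ?thesis
    by simp
qed

lemma integral_beam_slice:
  assumes h: "cont_supp_ball R h" and Y: "R + \<bar>u * fst g\<bar> \<le> Y"
  shows "integral {-Y..Y} (\<lambda>y. h ((y, s - t * y) + u *\<^sub>R g)) = radon R h t (s + u * (t * fst g + snd g))"
proof -
  let ?s = "s + u * (t * fst g + snd g)"
  have "h ((y, s - t * y) + u *\<^sub>R g) = h (y + u * fst g, ?s - t * (y + u * fst g))" for y
    by (cases g) (simp add: algebra_simps)
  then have "integral {-Y..Y} (\<lambda>y. h ((y, s - t * y) + u *\<^sub>R g))
           = integral {-Y + u * fst g..Y + u * fst g} (\<lambda>y. h (y, ?s - t * y))"
    using integral_shift_real_ivl[of "-Y + u * fst g" "u * fst g" "Y + u * fst g"] by simp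
  also have "\<dots> = radon R h t ?s"
    using Y by (intro radon_window[OF h]) auto
  finally show ?thesis .
qed

lemma has_integral_divbeam_along_lines:
  assumes h: "cont_supp_ball R h" and R: "0 \<le> R" and g: "norm g = 1"
    and a: "a = t * fst g + snd g" "a \<noteq> 0"
  shows "((\<lambda>y. divbeam g h (y, s - t * y)) has_integral
           (if 0 < a then radon_primitive R h t ((\<bar>t\<bar> + 1) * R) / a else 0) - radon_primitive R h t s / a)
         UNIV"
proof -
  define U where "U = (\<bar>s\<bar> + (\<bar>t\<bar> + 1) * R) / \<bar>a\<bar>"
  define Y where "Y = R + U"
  have U0: "0 \<le> U"
    using R by (simp add: U_def)
  define \<phi> where "\<phi> y u = h ((y, s - t * y) + u *\<^sub>R g)" for y u
  have cont: "continuous_on S (\<lambda>(y, u). \<phi> y u)" for S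
    unfolding \<phi>_def case_prod_beta' by (intro cont_supp_ball_compose[OF h] continuous_intros)
  have supp: "u < U \<and> \<bar>y\<bar> < Y" if "\<phi> y u \<noteq> 0" "0 \<le> u" for y u
  proof -
    from beam_nonzero_bounds[OF h g that[unfolded \<phi>_def]]
    have "\<bar>s + u * a\<bar> < (\<bar>t\<bar> + 1) * R" "\<bar>y\<bar> < R + u"
      by (simp_all add: a)
    then have "u * \<bar>a\<bar> < \<bar>s\<bar> + (\<bar>t\<bar> + 1) * R"
      using \<open>0 \<le> u\<close> by (simp add: abs_mult)
    then have "u < U"
      using a by (simp add: U_def pos_less_divide_eq)
    with \<open>\<bar>y\<bar> < R + u\<close> show ?thesis
      by (simp add: Y_def)
  qed
  have beam: "divbeam g h (y, s - t * y) = integral {0..U} (\<phi> y)" for y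
    unfolding divbeam_def \<phi>_def
  proof (intro integral_unique has_integral_halfline_window)
    show "continuous_on UNIV (\<lambda>u. h ((y, s - t * y) + u *\<^sub>R g))"
      by (intro cont_supp_ball_compose[OF h] continuous_intros)
    show "h ((y, s - t * y) + u *\<^sub>R g) = 0" if "U < u" for u
      using supp[of y u] that U0 unfolding \<phi>_def by force
  qed
  have "((\<lambda>y. integral {0..U} (\<phi> y)) has_integral
          integral {0..U} (\<lambda>u. integral {-Y..Y} (\<lambda>y. \<phi> y u))) UNIV"
    by (rule has_integral_UNIV_iterated[OF cont]) (use supp in force)
  moreover have "integral {-Y..Y} (\<lambda>y. \<phi> y u) = radon R h t (s + u * a)" if "u \<in> {0..U}" for u
  proof -
    have "\<bar>u * fst g\<bar> \<le> U"
      using that norm_fst_le[of "fst g" "snd g"] g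
      by (auto simp: abs_mult intro: order_trans[OF mult_left_le])
    then show ?thesis
      unfolding \<phi>_def a(1) by (intro integral_beam_slice[OF h]) (simp add: Y_def)
  qed
  then have "integral {0..U} (\<lambda>u. integral {-Y..Y} (\<lambda>y. \<phi> y u))
           = integral {0..U} (\<lambda>u. radon R h t (s + u * a))"
    by (rule integral_cong)
  ultimately show ?thesis
    using beam integral_radon_along_ray[OF h R a(2) U_def] by simp
qed

section \<open>Regular directions\<close>

definition regular_dir ::
    "nat \<Rightarrow> (nat \<Rightarrow> real) \<Rightarrow> (nat \<Rightarrow> real \<times> real) \<Rightarrow> real \<times> real \<Rightarrow> bool" where
  "regular_dir m c gam n \<longleftrightarrow> (\<forall>i<m. n \<bullet> gam i \<noteq> 0) \<and> gamma_vec m c gam n \<noteq> 0"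

lemma gamma_vec_scaleR:
  assumes "k \<noteq> 0"
  shows "gamma_vec m c gam (k *\<^sub>R n) = (1 / k) *\<^sub>R gamma_vec m c gam n"
  unfolding gamma_vec_def by (simp add: scaleR_sum_right)

lemma regular_dir_scaleR:
  assumes "k \<noteq> 0"
  shows "regular_dir m c gam (k *\<^sub>R n) \<longleftrightarrow> regular_dir m c gam n"
  unfolding regular_dir_def gamma_vec_scaleR[OF assms] using assms by simp

lemma prod_scaleR_gamma_vec:
  fixes m :: nat
  assumes nz: "\<And>i. i < m \<Longrightarrow> n \<bullet> gam i \<noteq> 0"
  shows "(\<Prod>j<m. n \<bullet> gam j) *\<^sub>R gamma_vec m c gam n
       = - (\<Sum>i<m. (c i * (\<Prod>j\<in>{..<m} - {i}. n \<bullet> gam j)) *\<^sub>R gam i)"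
proof -
  have "(\<Prod>j<m. n \<bullet> gam j) * (c i / (n \<bullet> gam i)) = c i * (\<Prod>j\<in>{..<m} - {i}. n \<bullet> gam j)"
    if "i < m" for i
    using that nz by (simp add: prod.remove[of "{..<m}" i])
  then show ?thesis
    unfolding gamma_vec_def by (simp add: scaleR_sum_right sum_negf)
qed

lemma regular_dir_iff_prod:
  fixes m :: nat
  shows "regular_dir m c gam n \<longleftrightarrow>
    (\<forall>i<m. n \<bullet> gam i \<noteq> 0) \<and>
    (\<Sum>i<m. (c i * (\<Prod>j\<in>{..<m} - {i}. n \<bullet> gam j)) *\<^sub>R gam i) \<noteq> 0"
proof (cases "\<forall>i<m. n \<bullet> gam i \<noteq> 0")
  case True
  let ?P = "\<Prod>j<m. n \<bullet> gam j"
  have "?P \<noteq> 0"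
    using True by simp
  then have "gamma_vec m c gam n = (1 / ?P) *\<^sub>R (?P *\<^sub>R gamma_vec m c gam n)"
    by simp
  also have "\<dots> = (1 / ?P) *\<^sub>R - (\<Sum>i<m. (c i * (\<Prod>j\<in>{..<m} - {i}. n \<bullet> gam j)) *\<^sub>R gam i)"
    using True by (subst prod_scaleR_gamma_vec) auto
  finally have "gamma_vec m c gam n
      = (1 / ?P) *\<^sub>R - (\<Sum>i<m. (c i * (\<Prod>j\<in>{..<m} - {i}. n \<bullet> gam j)) *\<^sub>R gam i)" .
  with True \<open>?P \<noteq> 0\<close> show ?thesis
    by (simp add: regular_dir_def)
next
  case False
  then show ?thesis
    by (auto simp: regular_dir_def)
qed

lemma finite_non_regular_dir_on_line:
  fixes m :: nat and p q :: "real \<times> real"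
  assumes reg: "regular_dir m c gam (p + u *\<^sub>R q)"
  shows "finite {w. \<not> regular_dir m c gam (p + w *\<^sub>R q)}"
proof -
  define L where "L j = [:p \<bullet> gam j, q \<bullet> gam j:]" for j
  have L: "(p + w *\<^sub>R q) \<bullet> gam j = poly (L j) w" for w j
    unfolding L_def by (simp add: inner_add_left algebra_simps)
  define V where "V w = (\<Sum>i<m. (c i * (\<Prod>j\<in>{..<m} - {i}. poly (L j) w)) *\<^sub>R gam i)" for w
  have regular_iff:
    "regular_dir m c gam (p + w *\<^sub>R q) \<longleftrightarrow> (\<forall>i<m. poly (L i) w \<noteq> 0) \<and> V w \<noteq> 0" for w
    by (simp only: regular_dir_iff_prod L V_def)
  define P1 where "P1 = (\<Sum>i<m. smult (c i * fst (gam i)) (\<Prod>j\<in>{..<m} - {i}. L j))"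
  define P2 where "P2 = (\<Sum>i<m. smult (c i * snd (gam i)) (\<Prod>j\<in>{..<m} - {i}. L j))"
  have V: "V w = (poly P1 w, poly P2 w)" for w
    by (simp add: V_def P1_def P2_def poly_sum poly_prod fst_sum snd_sum prod_eq_iff mult_ac)
  have sub: "{w. \<not> regular_dir m c gam (p + w *\<^sub>R q)}
      \<subseteq> (\<Union>i<m. {w. poly (L i) w = 0}) \<union> ({w. poly P1 w = 0} \<inter> {w. poly P2 w = 0})"
    by (auto simp: regular_iff V zero_prod_def)
  have L_finite: "finite {w. poly (L i) w = 0}" if "i < m" for i
  proof (rule poly_roots_finite)
    show "L i \<noteq> 0"
      using reg that by (auto simp: regular_iff)
  qed
  have "P1 \<noteq> 0 \<or> P2 \<noteq> 0"
    using reg by (auto simp: regular_iff V zero_prod_def)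
  then have "finite {w. poly P1 w = 0} \<or> finite {w. poly P2 w = 0}"
    using poly_roots_finite by blast
  then have "finite ({w. poly P1 w = 0} \<inter> {w. poly P2 w = 0})"
    by (rule finite_Int)
  with L_finite show ?thesis
    using finite_subset[OF sub] by simp
qed

lemma infinite_regular_dir_on_line:
  fixes p q :: "real \<times> real"
  assumes "regular_dir m c gam (p + u *\<^sub>R q)"
  shows "infinite {w. regular_dir m c gam (p + w *\<^sub>R q)}"
proof -
  have "finite (- {w. regular_dir m c gam (p + w *\<^sub>R q)})"
    using finite_non_regular_dir_on_line[OF assms] by (simp add: Compl_eq)
  then show ?thesis
    by (metis Compl_partition2 finite_Un infinite_UNIV_char_0)
qed

lemma infinite_regular_slopes:
  assumes reg: "regular_dir m c gam psi" and "psi \<noteq> 0"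
  shows "infinite {t. regular_dir m c gam (t, 1)}"
proof (cases "snd psi = 0")
  case False
  have "(fst psi / snd psi, 1) = (1 / snd psi) *\<^sub>R psi"
    using False by (simp add: prod_eq_iff)
  then have "regular_dir m c gam (fst psi / snd psi, 1)"
    using reg regular_dir_scaleR[of "1 / snd psi"] False by simp
  with infinite_regular_dir_on_line[of m c gam "(0, 1)" "fst psi / snd psi" "(1, 0)"] show ?thesis
    by simp
next
  case True
  with \<open>psi \<noteq> 0\<close> have "fst psi \<noteq> 0"
    by (simp add: prod_eq_iff)
  moreover have "(1, 0) = (1 / fst psi) *\<^sub>R psi"
    using True \<open>fst psi \<noteq> 0\<close> by (simp add: prod_eq_iff)
  ultimately have "regular_dir m c gam (1, 0)"
    using reg regular_dir_scaleR[of "1 / fst psi"] by simp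
  with infinite_regular_dir_on_line[of m c gam "(1, 0)" 0 "(0, 1)"]
  have "infinite ({w. regular_dir m c gam (1, w)} - {0})"
    by simp
  moreover have "inj_on (\<lambda>w. 1 / w) ({w. regular_dir m c gam (1, w)} - {0})"
    by (auto simp: inj_on_def)
  moreover have "(\<lambda>w. 1 / w) ` ({w. regular_dir m c gam (1, w)} - {0}) \<subseteq> {t. regular_dir m c gam (t, 1)}"
  proof clarify
    fix w
    assume "regular_dir m c gam (1, w)" "w \<noteq> 0"
    then show "regular_dir m c gam (1 / w, 1)"
      using regular_dir_scaleR[of "1 / w" m c gam "(1, w)"] by simp
  qed
  ultimately show ?thesis
    by (meson finite_imageD finite_subset)
qed

section \<open>Vanishing of the line integrals\<close>

lemma weighted_radon_primitives_const:
  fixes m :: nat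
  assumes R: "0 \<le> R" and g: "\<And>i. i < m \<Longrightarrow> norm (gam i) = 1"
    and h: "\<And>i. i < m \<Longrightarrow> cont_supp_ball R (h i)"
    and a: "\<And>i. i < m \<Longrightarrow> (t, 1) \<bullet> gam i \<noteq> 0"
    and S: "\<And>x. (\<Sum>i<m. c i * divbeam (gam i) (h i) x) = 0"
  shows "(\<Sum>i<m. c i / ((t, 1) \<bullet> gam i) * radon_primitive R (h i) t s)
       = (\<Sum>i<m. c i / ((t, 1) \<bullet> gam i) * radon_primitive R (h i) t s')"
proof -
  have a_eq: "(t, 1) \<bullet> gam i = t * fst (gam i) + snd (gam i)" for i
    by (simp add: inner_prod_def)
  define C where "C i = (if 0 < (t, 1) \<bullet> gam i
                           then radon_primitive R (h i) t ((\<bar>t\<bar> + 1) * R) / ((t, 1) \<bullet> gam i) else 0)" for i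
  have "(\<Sum>i<m. c i / ((t, 1) \<bullet> gam i) * radon_primitive R (h i) t s) = (\<Sum>i<m. c i * C i)" for s
  proof -
    have "((\<lambda>y. \<Sum>i<m. c i * divbeam (gam i) (h i) (y, s - t * y)) has_integral
            (\<Sum>i<m. c i * (C i - radon_primitive R (h i) t s / ((t, 1) \<bullet> gam i)))) UNIV"
      unfolding C_def
      by (intro has_integral_sum has_integral_mult_right has_integral_divbeam_along_lines[OF h R g a_eq a])
        auto
    then have "(\<Sum>i<m. c i * (C i - radon_primitive R (h i) t s / ((t, 1) \<bullet> gam i))) = 0"
      using S by (simp add: has_integral_0_eq)
    then show ?thesis
      by (simp add: right_diff_distrib sum_subtractf)
  qed
  then show ?thesis
    by simp
qed

lemma inner_perp_right: "u \<bullet> perp v = - (perp u \<bullet> v)"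
  by (simp add: perp_def inner_prod_def)

lemma eq_0_if_inner_perp_eq_0:
  fixes u v :: "real \<times> real"
  assumes "v \<noteq> 0" "u \<bullet> v = 0" "perp u \<bullet> v = 0"
  shows "u = 0"
proof -
  obtain u1 u2 v1 v2 where uv: "u = (u1, u2)" "v = (v1, v2)"
    by (cases u, cases v)
  have "u1 * v1 + u2 * v2 = 0" "u1 * v2 - u2 * v1 = 0"
    using assms(2,3) by (simp_all add: uv perp_def inner_prod_def)
  moreover have "u1 * (v1 * v1 + v2 * v2) = v1 * (u1 * v1 + u2 * v2) + v2 * (u1 * v2 - u2 * v1)"
    "u2 * (v1 * v1 + v2 * v2) = v2 * (u1 * v1 + u2 * v2) - v1 * (u1 * v2 - u2 * v1)"
    by (simp_all add: algebra_simps)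
  ultimately have "u1 * (v1 * v1 + v2 * v2) = 0" "u2 * (v1 * v1 + v2 * v2) = 0"
    by simp_all
  moreover have "v1 * v1 + v2 * v2 \<noteq> 0"
    using assms(1) uv by (auto simp: add_nonneg_eq_0_iff zero_prod_def)
  ultimately show ?thesis
    by (auto simp: uv zero_prod_def)
qed

definition radon_primitive_field ::
    "real \<Rightarrow> (real \<times> real \<Rightarrow> real \<times> real) \<Rightarrow> real \<Rightarrow> real \<Rightarrow> real \<times> real" where
  "radon_primitive_field R F t s =
     (radon_primitive R (\<lambda>x. fst (F x)) t s, radon_primitive R (\<lambda>x. snd (F x)) t s)"

lemma radon_primitive_inner:
  assumes "cont_supp_ball R (\<lambda>x. fst (F x))" "cont_supp_ball R (\<lambda>x. snd (F x))"
  shows "radon_primitive R (\<lambda>x. F x \<bullet> v) t s = radon_primitive_field R F t s \<bullet> v"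
  using radon_primitive_lincomb[OF assms, of "fst v" "snd v" t s]
  by (simp add: radon_primitive_field_def inner_prod_def mult.commute)

lemma radon_primitive_field_inner_gamma_vec_const:
  fixes m :: nat
  assumes R: "0 \<le> R" and g: "\<And>i. i < m \<Longrightarrow> norm (gam i) = 1"
    and F1: "cont_supp_ball R (\<lambda>x. fst (F x))" and F2: "cont_supp_ball R (\<lambda>x. snd (F x))"
    and a: "\<And>i. i < m \<Longrightarrow> (t, 1) \<bullet> gam i \<noteq> 0"
    and S: "star_transform m c gam F = (\<lambda>_. 0)"
  shows "radon_primitive_field R F t s \<bullet> gamma_vec m c gam (t, 1)
       = radon_primitive_field R F t s' \<bullet> gamma_vec m c gam (t, 1)"
    and "perp (radon_primitive_field R F t s) \<bullet> gamma_vec m c gam (t, 1)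
       = perp (radon_primitive_field R F t s') \<bullet> gamma_vec m c gam (t, 1)"
proof -
  have "star_transform m c gam F x = 0" for x
    using S by simp
  then have S1: "(\<Sum>i<m. c i * divbeam (gam i) (\<lambda>y. F y \<bullet> gam i) x) = 0"
    and S2: "(\<Sum>i<m. c i * divbeam (gam i) (\<lambda>y. F y \<bullet> perp (gam i)) x) = 0" for x
    unfolding star_transform_def by (simp_all add: zero_prod_def)
  from weighted_radon_primitives_const[OF R g cont_supp_ball_inner[OF F1 F2] a S1]
  show "radon_primitive_field R F t s \<bullet> gamma_vec m c gam (t, 1)
       = radon_primitive_field R F t s' \<bullet> gamma_vec m c gam (t, 1)"
    by (simp add: radon_primitive_inner[OF F1 F2] gamma_vec_def inner_sum_right)
  from weighted_radon_primitives_const[OF R g cont_supp_ball_inner[OF F1 F2] a S2]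
  show "perp (radon_primitive_field R F t s) \<bullet> gamma_vec m c gam (t, 1)
       = perp (radon_primitive_field R F t s') \<bullet> gamma_vec m c gam (t, 1)"
    unfolding radon_primitive_inner[OF F1 F2]
    by (simp add: inner_perp_right gamma_vec_def inner_sum_right sum_negf)
qed

lemma radon_eq_0_if_star_transform_eq_0:
  fixes m :: nat
  assumes R: "0 \<le> R" and g: "\<And>i. i < m \<Longrightarrow> norm (gam i) = 1"
    and F1: "cont_supp_ball R (\<lambda>x. fst (F x))" and F2: "cont_supp_ball R (\<lambda>x. snd (F x))"
    and reg: "regular_dir m c gam (t, 1)"
    and S: "star_transform m c gam F = (\<lambda>_. 0)"
  shows "radon R (\<lambda>x. fst (F x)) t s = 0" "radon R (\<lambda>x. snd (F x)) t s = 0"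
proof -
  let ?J = "radon_primitive_field R F t" and ?s0 = "-((\<bar>t\<bar> + 1) * R)"
  have a: "\<And>i. i < m \<Longrightarrow> (t, 1) \<bullet> gam i \<noteq> 0" and V: "gamma_vec m c gam (t, 1) \<noteq> 0"
    using reg by (auto simp: regular_dir_def)
  note const = radon_primitive_field_inner_gamma_vec_const[OF R g F1 F2 a S]
  have "?J ?s0 = 0"
    by (simp add: radon_primitive_field_def radon_primitive_eq_0[OF F1] radon_primitive_eq_0[OF F2] zero_prod_def)
  then have "?J s = 0" for s
    using const(1)[of s ?s0] const(2)[of s ?s0]
    by (intro eq_0_if_inner_perp_eq_0[OF V]) (simp_all add: perp_def inner_prod_def)
  then show "radon R (\<lambda>x. fst (F x)) t s = 0" "radon R (\<lambda>x. snd (F x)) t s = 0"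
    by (auto intro!: radon_eq_0_if_primitive_eq_0 F1 F2 simp: radon_primitive_field_def prod_eq_iff)
qed

section \<open>Recovering a function from its line integrals\<close>

inductive plane_poly :: "(real \<times> real \<Rightarrow> real) \<Rightarrow> bool" where
  const: "plane_poly (\<lambda>x. c)"
| add: "plane_poly p \<Longrightarrow> plane_poly q \<Longrightarrow> plane_poly (\<lambda>x. p x + q x)"
| mult_fst: "plane_poly p \<Longrightarrow> plane_poly (\<lambda>x. fst x * p x)"
| mult_snd: "plane_poly p \<Longrightarrow> plane_poly (\<lambda>x. snd x * p x)"

lemma plane_poly_cmult: "plane_poly p \<Longrightarrow> plane_poly (\<lambda>x. c * p x)"
proof (induction rule: plane_poly.induct)
  case (const d)
  show ?case
    using plane_poly.const by simp
next
  case (add p q)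
  then show ?case
    using plane_poly.add[OF add.IH] by (simp add: distrib_left)
next
  case (mult_fst p)
  then show ?case
    using plane_poly.mult_fst[OF mult_fst.IH] by (simp add: mult.left_commute)
next
  case (mult_snd p)
  then show ?case
    using plane_poly.mult_snd[OF mult_snd.IH] by (simp add: mult.left_commute)
qed

lemma plane_poly_mult: "plane_poly p \<Longrightarrow> plane_poly q \<Longrightarrow> plane_poly (\<lambda>x. p x * q x)"
proof (induction rule: plane_poly.induct)
  case (const c)
  then show ?case
    by (rule plane_poly_cmult)
next
  case (add p1 p2)
  then show ?case
    using plane_poly.add[OF add.IH] by (simp add: distrib_right)
next
  case (mult_fst p)
  then show ?case
    using plane_poly.mult_fst[OF mult_fst.IH] by (simp add: mult.assoc)
next
  case (mult_snd p)
  then show ?case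
    using plane_poly.mult_snd[OF mult_snd.IH] by (simp add: mult.assoc)
qed

lemma continuous_on_plane_poly: "plane_poly p \<Longrightarrow> continuous_on S p"
  by (induction rule: plane_poly.induct) (auto intro!: continuous_intros)

lemma plane_poly_approx:
  assumes "compact S" "continuous_on S f" "0 < e"
  shows "\<exists>p. plane_poly p \<and> (\<forall>x\<in>S. \<bar>f x - p x\<bar> < e)"
proof -
  have "\<exists>p. plane_poly p \<and> p x \<noteq> p y" if "x \<noteq> y" for x y :: "real \<times> real"
  proof (cases "fst x = fst y")
    case True
    with that have "snd x \<noteq> snd y"
      by (simp add: prod_eq_iff)
    then show ?thesis
      using plane_poly.mult_snd[OF plane_poly.const[of 1]] by (intro exI[of _ "\<lambda>x. snd x * 1"]) auto
  next
    case False
    then show ?thesis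
      using plane_poly.mult_fst[OF plane_poly.const[of 1]] by (intro exI[of _ "\<lambda>x. fst x * 1"]) auto
  qed
  then show ?thesis
    by (intro Stone_Weierstrass_HOL[of S plane_poly f e])
      (use assms plane_poly.const plane_poly.add plane_poly_mult continuous_on_plane_poly in auto)
qed

lemma integral_mult_plane_poly_eq_0:
  fixes f :: "real \<times> real \<Rightarrow> real"
  assumes f: "continuous_on (cbox a b) f"
    and M: "\<And>j l. integral (cbox a b) (\<lambda>x. f x * fst x ^ j * snd x ^ l) = 0"
    and p: "plane_poly p"
  shows "integral (cbox a b) (\<lambda>x. f x * p x) = 0"
proof -
  have "\<forall>j l. integral (cbox a b) (\<lambda>x. f x * p x * fst x ^ j * snd x ^ l) = 0"
    using p
  proof (induction rule: plane_poly.induct)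
    case (const c)
    have "integral (cbox a b) (\<lambda>x. f x * c * fst x ^ j * snd x ^ l)
        = integral (cbox a b) (\<lambda>x. c * (f x * fst x ^ j * snd x ^ l))" for j l
      by (simp add: algebra_simps)
    then show ?case
      using M by simp
  next
    case (add p q)
    have "(\<lambda>x. f x * r x * fst x ^ j * snd x ^ l) integrable_on cbox a b" if "plane_poly r" for r j l
      using that by (intro integrable_continuous continuous_intros continuous_on_plane_poly f)
    with add show ?case
      by (simp add: distrib_left distrib_right Henstock_Kurzweil_Integration.integral_add)
  next
    case (mult_fst p)
    have "integral (cbox a b) (\<lambda>x. f x * (fst x * p x) * fst x ^ j * snd x ^ l)
        = integral (cbox a b) (\<lambda>x. f x * p x * fst x ^ Suc j * snd x ^ l)" for j l
      by (simp add: algebra_simps)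
    then show ?case
      using mult_fst.IH by (simp del: power_Suc)
  next
    case (mult_snd p)
    have "integral (cbox a b) (\<lambda>x. f x * (snd x * p x) * fst x ^ j * snd x ^ l)
        = integral (cbox a b) (\<lambda>x. f x * p x * fst x ^ j * snd x ^ Suc l)" for j l
      by (simp add: algebra_simps)
    then show ?case
      using mult_snd.IH by (simp del: power_Suc)
  qed
  from this[rule_format, of 0 0] show ?thesis
    by simp
qed

lemma abs_integral_mult_le_if_moments_eq_0:
  fixes f g :: "real \<times> real \<Rightarrow> real"
  assumes f: "continuous_on (cbox a b) f" and g: "continuous_on (cbox a b) g"
    and M: "\<And>j l. integral (cbox a b) (\<lambda>x. f x * fst x ^ j * snd x ^ l) = 0"
    and e: "0 < e"
  shows "\<bar>integral (cbox a b) (\<lambda>x. f x * g x)\<bar> \<le> e * integral (cbox a b) (\<lambda>x. \<bar>f x\<bar>)"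
proof -
  obtain p where p: "plane_poly p" and pe: "\<forall>x\<in>cbox a b. \<bar>g x - p x\<bar> < e"
    using plane_poly_approx[OF compact_cbox g e] by blast
  have int_abs: "(\<lambda>x. \<bar>f x\<bar>) integrable_on cbox a b"
    and int_p: "(\<lambda>x. f x * p x) integrable_on cbox a b"
    and int_d: "(\<lambda>x. f x * (g x - p x)) integrable_on cbox a b"
    by (intro integrable_continuous continuous_intros continuous_on_plane_poly[OF p] f g)+
  have "integral (cbox a b) (\<lambda>x. f x * g x) = integral (cbox a b) (\<lambda>x. f x * (g x - p x) + f x * p x)"
    by (simp add: algebra_simps)
  also have "\<dots> = integral (cbox a b) (\<lambda>x. f x * (g x - p x))"
    using Henstock_Kurzweil_Integration.integral_add[OF int_d int_p]
      integral_mult_plane_poly_eq_0[OF f M p] by simp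
  finally have "norm (integral (cbox a b) (\<lambda>x. f x * g x))
      = norm (integral (cbox a b) (\<lambda>x. f x * (g x - p x)))"
    by simp
  also have "\<dots> \<le> integral (cbox a b) (\<lambda>x. e * \<bar>f x\<bar>)"
  proof (rule integral_norm_bound_integral[OF int_d integrable_on_mult_right[OF int_abs]])
    fix x
    assume "x \<in> cbox a b"
    with pe have "\<bar>g x - p x\<bar> * \<bar>f x\<bar> \<le> e * \<bar>f x\<bar>"
      by (intro mult_right_mono) auto
    then show "norm (f x * (g x - p x)) \<le> e * \<bar>f x\<bar>"
      by (simp add: abs_mult mult.commute)
  qed
  finally show ?thesis
    by simp
qed

lemma integral_mult_eq_0_if_moments_eq_0:
  fixes f g :: "real \<times> real \<Rightarrow> real"
  assumes f: "continuous_on (cbox a b) f" and g: "continuous_on (cbox a b) g"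
    and M: "\<And>j l. integral (cbox a b) (\<lambda>x. f x * fst x ^ j * snd x ^ l) = 0"
  shows "integral (cbox a b) (\<lambda>x. f x * g x) = 0"
proof -
  define A where "A = integral (cbox a b) (\<lambda>x. \<bar>f x\<bar>)"
  have "0 \<le> A"
    unfolding A_def by (intro integral_nonneg integrable_continuous continuous_intros f) auto
  have "\<bar>integral (cbox a b) (\<lambda>x. f x * g x)\<bar> \<le> 0"
  proof (rule field_le_epsilon)
    fix e :: real
    assume "0 < e"
    with \<open>0 \<le> A\<close> have "\<bar>integral (cbox a b) (\<lambda>x. f x * g x)\<bar> \<le> e / (A + 1) * A"
      unfolding A_def by (intro abs_integral_mult_le_if_moments_eq_0[OF f g M]) simp
    also have "\<dots> \<le> e"
      using \<open>0 < e\<close> \<open>0 \<le> A\<close> by (simp add: field_simps)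
    finally show "\<bar>integral (cbox a b) (\<lambda>x. f x * g x)\<bar> \<le> 0 + e"
      by simp
  qed
  then show ?thesis
    by simp
qed

lemma eq_0_if_moments_eq_0:
  fixes f :: "real \<times> real \<Rightarrow> real"
  assumes f: "continuous_on (cbox a b) f" and ne: "box a b \<noteq> {}"
    and M: "\<And>j l. integral (cbox a b) (\<lambda>x. f x * fst x ^ j * snd x ^ l) = 0"
    and x: "x \<in> cbox a b"
  shows "f x = 0"
proof -
  have "(\<lambda>x. f x * f x) integrable_on cbox a b"
    by (intro integrable_continuous continuous_intros f)
  then have "((\<lambda>x. f x * f x) has_integral 0) (cbox a b)"
    using integral_mult_eq_0_if_moments_eq_0[OF f f M] by (metis has_integral_integral)
  then have "f x * f x = 0"
    by (intro has_integral_0_cbox_imp_0[OF continuous_on_mult[OF f f] _ _ ne x]) auto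
  then show ?thesis
    by simp
qed

lemma moments_eq_0_if_pencil_moments_eq_0:
  fixes f :: "real \<times> real \<Rightarrow> real"
  assumes f: "continuous_on (cbox a b) f" and T: "infinite T"
    and Z: "\<And>t n. t \<in> T \<Longrightarrow> integral (cbox a b) (\<lambda>x. f x * (t * fst x + snd x) ^ n) = 0"
  shows "integral (cbox a b) (\<lambda>x. f x * fst x ^ j * snd x ^ l) = 0"
proof -
  define n where "n = j + l"
  define M where "M i = of_nat (n choose i) * integral (cbox a b) (\<lambda>x. f x * fst x ^ i * snd x ^ (n - i))" for i
  define P where "P = (\<Sum>i\<le>n. monom (M i) i)"
  have "poly P t = integral (cbox a b) (\<lambda>x. f x * (t * fst x + snd x) ^ n)" for t
  proof -
    have "(\<lambda>x. f x * (t * fst x + snd x) ^ n)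
        = (\<lambda>x. \<Sum>i\<le>n. (of_nat (n choose i) * t ^ i) * (f x * fst x ^ i * snd x ^ (n - i)))"
      by (simp add: binomial_ring sum_distrib_left power_mult_distrib mult_ac)
    then have "integral (cbox a b) (\<lambda>x. f x * (t * fst x + snd x) ^ n)
        = (\<Sum>i\<le>n. (of_nat (n choose i) * t ^ i) * integral (cbox a b) (\<lambda>x. f x * fst x ^ i * snd x ^ (n - i)))"
      by (simp add: Henstock_Kurzweil_Integration.integral_sum integrable_continuous continuous_intros f)
    then show ?thesis
      by (simp add: P_def M_def poly_sum poly_monom mult_ac)
  qed
  then have "T \<subseteq> {t. poly P t = 0}"
    using Z by auto
  then have "P = 0"
    using T poly_roots_finite finite_subset by blast
  moreover have "coeff P j = M j"
    unfolding P_def by (rule coeff_sum_monom) (simp add: n_def)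
  ultimately show ?thesis
    by (simp add: M_def n_def)
qed

lemma integral_vertical_shift:
  assumes f: "cont_supp_ball R f" and \<phi>: "continuous_on UNIV \<phi>" and y: "\<bar>y\<bar> \<le> R"
  shows "integral {-R..R} (\<lambda>z. f (y, z) * \<phi> (t * y + z))
       = integral {-((\<bar>t\<bar> + 1) * R)..(\<bar>t\<bar> + 1) * R} (\<lambda>s. f (y, s - t * y) * \<phi> s)"
proof -
  define k where "k s = f (y, s - t * y) * \<phi> s" for s
  have "integral {-R..R} (\<lambda>z. f (y, z) * \<phi> (t * y + z)) = integral {-R..R} (\<lambda>z. k (z + t * y))"
    by (simp add: k_def algebra_simps)
  also have "\<dots> = integral {-R + t * y..R + t * y} k"
    using integral_shift_real_ivl[of "-R + t * y" "t * y" "R + t * y" k] by simp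
  also have "\<dots> = integral {-((\<bar>t\<bar> + 1) * R)..(\<bar>t\<bar> + 1) * R} k"
  proof (rule integral_window_eq[symmetric])
    show "continuous_on UNIV k"
      unfolding k_def
      by (intro continuous_intros cont_supp_ball_compose[OF f] continuous_on_compose2[OF \<phi>]) auto
    show "k s = 0" if "s \<notin> {-R + t * y..R + t * y}" for s
      using that cont_supp_ball_nonzero_Pair(2)[OF f, of y "s - t * y"] by (force simp: k_def)
    have "\<bar>t * y\<bar> \<le> \<bar>t\<bar> * R"
      using y by (simp add: abs_mult mult_left_mono)
    then show "{-R + t * y..R + t * y} \<subseteq> {-((\<bar>t\<bar> + 1) * R)..(\<bar>t\<bar> + 1) * R}"
      by (auto simp: algebra_simps)
  qed
  finally show ?thesis
    by (simp add: k_def[abs_def])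
qed

lemma integral_pencil_eq_integral_radon:
  assumes f: "cont_supp_ball R f" and \<phi>: "continuous_on UNIV \<phi>"
  shows "integral (cbox (-R, -R) (R, R)) (\<lambda>x. f x * \<phi> (t * fst x + snd x))
       = integral {-((\<bar>t\<bar> + 1) * R)..(\<bar>t\<bar> + 1) * R} (\<lambda>s. radon R f t s * \<phi> s)"
proof -
  let ?B = "(\<bar>t\<bar> + 1) * R"
  have \<phi>_compose: "continuous_on S (\<lambda>x. \<phi> (p x))"
    if "continuous_on S p" for S and p :: "'a::topological_space \<Rightarrow> real"
    using continuous_on_compose2[OF \<phi> that] by simp
  have "integral (cbox (-R, -R) (R, R)) (\<lambda>x. f x * \<phi> (t * fst x + snd x))
      = integral {-R..R} (\<lambda>y. integral {-R..R} (\<lambda>z. f (y, z) * \<phi> (t * y + z)))"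
    by (subst integral_prod_continuous)
       (auto simp: cbox_interval intro!: continuous_intros cont_supp_ball_compose[OF f] \<phi>_compose)
  also have "\<dots> = integral {-R..R} (\<lambda>y. integral {-?B..?B} (\<lambda>s. f (y, s - t * y) * \<phi> s))"
    by (intro integral_cong integral_vertical_shift[OF f \<phi>]) auto
  also have "\<dots> = integral {-?B..?B} (\<lambda>s. integral {-R..R} (\<lambda>y. f (y, s - t * y) * \<phi> s))"
    using integral_swap_continuous[of "-R" "-?B" R ?B "\<lambda>y s. f (y, s - t * y) * \<phi> s"]
    by (simp add: case_prod_beta' continuous_intros cont_supp_ball_compose[OF f] \<phi>_compose)
  also have "\<dots> = integral {-?B..?B} (\<lambda>s. radon R f t s * \<phi> s)"
    by (simp add: radon_def)
  finally show ?thesis .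
qed

lemma eq_0_if_radon_eq_0:
  assumes f: "cont_supp_ball R f" and R: "0 < R" and T: "infinite T"
    and L: "\<And>t s. t \<in> T \<Longrightarrow> radon R f t s = 0"
  shows "f x = 0"
proof (cases "x \<in> cbox (-R, -R) (R, R)")
  case True
  show ?thesis
  proof (rule eq_0_if_moments_eq_0[OF cont_supp_ball_continuous[OF f] _ _ True])
    show "box (-R, -R) (R, R) \<noteq> {}"
      using R by (auto simp: box_ne_empty inner_Pair Basis_prod_def)
    fix j l
    show "integral (cbox (-R, -R) (R, R)) (\<lambda>x. f x * fst x ^ j * snd x ^ l) = 0"
    proof (rule moments_eq_0_if_pencil_moments_eq_0[OF cont_supp_ball_continuous[OF f] T])
      fix t n
      assume "t \<in> T"
      have "continuous_on UNIV (\<lambda>s::real. s ^ n)"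
        by (intro continuous_intros)
      from integral_pencil_eq_integral_radon[OF f this, of t]
      show "integral (cbox (-R, -R) (R, R)) (\<lambda>x. f x * (t * fst x + snd x) ^ n) = 0"
        using L[OF \<open>t \<in> T\<close>] by simp
    qed
  qed
next
  case False
  obtain a b where x: "x = (a, b)"
    by (cases x)
  with False have "R < \<bar>a\<bar> \<or> R < \<bar>b\<bar>"
    by (auto simp: cbox_Pair_iff)
  then have "R \<le> norm x"
    unfolding x using norm_fst_le[of a b] norm_snd_le[of b a] by auto
  then show ?thesis
    by (rule cont_supp_ball_eq_0[OF f])
qed

lemma star_transform_eq_0_imp_eq_0:
  fixes m :: nat
  assumes R: "0 < R" and g: "\<And>i. i < m \<Longrightarrow> norm (gam i) = 1"
    and F1: "cont_supp_ball R (\<lambda>x. fst (F x))" and F2: "cont_supp_ball R (\<lambda>x. snd (F x))"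
    and reg: "regular_dir m c gam psi" "psi \<noteq> 0"
    and S: "star_transform m c gam F = (\<lambda>_. 0)"
  shows "F = (\<lambda>_. 0)"
proof -
  have T: "infinite {t. regular_dir m c gam (t, 1)}"
    by (rule infinite_regular_slopes[OF reg])
  have "fst (F x) = 0" "snd (F x) = 0" for x
    using R radon_eq_0_if_star_transform_eq_0[OF _ g F1 F2 _ S]
    by (auto intro!: eq_0_if_radon_eq_0[OF F1 R T] eq_0_if_radon_eq_0[OF F2 R T])
  then show ?thesis
    by (simp add: fun_eq_iff prod_eq_iff)
qed

theorem corollary2:
  fixes R :: real and m :: nat and c :: "nat \<Rightarrow> real" and gam :: "nat \<Rightarrow> real \<times> real"
  assumes "R > 0"
    and "inj_on gam {..<m}"
    and "\<And>i. i < m \<Longrightarrow> norm (gam i) = 1"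
    and "\<And>i. i < m \<Longrightarrow> c i \<noteq> 0"
    and "\<exists>psi. norm psi = 1 \<and> psi \<notin> Z1 m gam \<and> gamma_vec m c gam psi \<noteq> 0"
  shows "inj_on (star_transform m c gam)
           {f. C2c (ball 0 R) (\<lambda>x. fst (f x)) \<and> C2c (ball 0 R) (\<lambda>x. snd (f x))}"
proof (rule inj_onI)
  fix f h
  assume "f \<in> {f. C2c (ball 0 R) (\<lambda>x. fst (f x)) \<and> C2c (ball 0 R) (\<lambda>x. snd (f x))}"
    and "h \<in> {f. C2c (ball 0 R) (\<lambda>x. fst (f x)) \<and> C2c (ball 0 R) (\<lambda>x. snd (f x))}"
    and eq: "star_transform m c gam f = star_transform m c gam h"
  then have f: "cont_supp_ball R (\<lambda>x. fst (f x))" "cont_supp_ball R (\<lambda>x. snd (f x))"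
    and h: "cont_supp_ball R (\<lambda>x. fst (h x))" "cont_supp_ball R (\<lambda>x. snd (h x))"
    by (auto intro: cont_supp_ball_if_C2c)
  obtain psi where "norm psi = 1" "psi \<notin> Z1 m gam" "gamma_vec m c gam psi \<noteq> 0"
    using assms(5) by blast
  then have reg: "regular_dir m c gam psi" "psi \<noteq> 0"
    by (auto simp: regular_dir_def Z1_def)
  have diff: "cont_supp_ball R (\<lambda>x. fst (f x - h x))" "cont_supp_ball R (\<lambda>x. snd (f x - h x))"
    using cont_supp_ball_diff[OF f(1) h(1)] cont_supp_ball_diff[OF f(2) h(2)] by simp_all
  have "star_transform m c gam (\<lambda>x. f x - h x) = (\<lambda>_. 0)"
    using star_transform_diff[OF assms(3) f h] eq by auto
  then have "(\<lambda>x. f x - h x) = (\<lambda>_. 0)"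
    by (intro star_transform_eq_0_imp_eq_0[OF assms(1,3) diff reg])
  then show "f = h"
    by (simp add: fun_eq_iff)
qed

end
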